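(* Let $n,m\in\mathbb{N}_0$. Then $L_n^{(m)}(1)=0$ if and only if $n=1$ and $m=0$.
   Context: Generalized Laguerre polynomials: $L_n^{(\alpha)}(x)=\sum_{j=0}^n(-1)^j\binom{n+\alpha}{n-j}\frac{x^j}{j!}$. *)

theory Defs
  imports Complex_Main
begin

definition laguerre :: "nat \<Rightarrow> real \<Rightarrow> real \<Rightarrow> real" where
  "laguerre n \<alpha> x = (\<Sum>j=0..n. (-1)^j * ((real n + \<alpha>) gchoose (n - j)) * x ^ j / fact j)"

end

theory Submission
  imports Defs
begin

text \<open>For a natural parameter \<open>m\<close>, the number \<open>n! L_n^(m)(k)\<close> at an integer \<open>k\<close> is an
  integer, and every term of its defining sum except the last one (\<open>j = n\<close>) carries the
  factor \<open>n!/j!\<close>, which is divisible by \<open>n\<close>. Hence \<open>n! L_n^(m)(1) \<equiv> (-1)^n (mod n)\<close>,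
  which cannot vanish once \<open>n \<ge> 2\<close>; for \<open>n \<le> 1\<close> one computes \<open>L_0 = 1\<close> and
  \<open>L_1^(m)(1) = m\<close>.\<close>

definition scaled_laguerre :: "nat \<Rightarrow> nat \<Rightarrow> int \<Rightarrow> int" where
  "scaled_laguerre n m k =
     (\<Sum>j\<le>n. (-1)^j * int ((n + m) choose (n - j)) * k^j * int (fact n div fact j))"

lemma of_int_scaled_laguerre:
  "real_of_int (scaled_laguerre n m k) = fact n * laguerre n (real m) (of_int k)"
proof -
  have "real (fact n div fact j) = fact n / fact j" if "j \<le> n" for j
    using that by (simp add: real_of_nat_div fact_dvd)
  then show ?thesis
    unfolding scaled_laguerre_def laguerre_def atLeast0AtMost sum_distrib_left of_int_sum
    by (intro sum.cong) (auto simp: binomial_gbinomial[symmetric] simp flip: of_nat_add)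
qed

lemma dvd_fact_div_fact:
  assumes "j < n"
  shows "n dvd fact n div fact j"
proof -
  have "fact j dvd (fact (n - 1) :: nat)"
    using assms by (intro fact_dvd) simp
  moreover have "fact n = n * fact (n - 1)"
    using assms by (simp add: fact_reduce)
  ultimately have "fact n div fact j = n * (fact (n - 1) div fact j)"
    by (simp add: div_mult_swap)
  then show ?thesis by simp
qed

lemma scaled_laguerre_cong_last_term:
  "int n dvd scaled_laguerre n m k - (-1)^n * k^n"
proof -
  have "scaled_laguerre n m k - (-1)^n * k^n =
    (\<Sum>j<n. (-1)^j * int ((n + m) choose (n - j)) * k^j * int (fact n div fact j))"
    by (simp add: scaled_laguerre_def lessThan_Suc_atMost[symmetric])
  also have "int n dvd \<dots>"
    using dvd_fact_div_fact by (intro dvd_sum dvd_mult) (simp add: int_dvd_int_iff)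
  finally show ?thesis .
qed

lemma laguerre_one_nonzero:
  assumes "n \<ge> 2"
  shows "laguerre n (real m) 1 \<noteq> 0"
proof
  assume "laguerre n (real m) 1 = 0"
  then have "scaled_laguerre n m 1 = 0"
    using of_int_scaled_laguerre[of n m 1] by simp
  then have "int n dvd (-1)^n"
    using scaled_laguerre_cong_last_term[of n m 1] by simp
  moreover have "is_unit ((-1::int)^n)"
    by simp
  ultimately have "is_unit (int n)"
    by (rule dvd_unit_imp_unit)
  with assms show False by simp
qed

theorem proposition2:
  fixes n m :: nat
  shows "laguerre n (real m) 1 = 0 \<longleftrightarrow> n = 1 \<and> m = 0"
proof (cases "n \<ge> 2")
  case True
  then show ?thesis using laguerre_one_nonzero by simp
next
  case False
  then have "n = 0 \<or> n = 1" by linarith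
  then show ?thesis by (auto simp: laguerre_def)
qed

end
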